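(* Let $G$ be a finitely generated group and let $H=G/K$, where $K$ is the normal subgroup of $G$ generated by finitely many elements $r_1,\dots,r_m\in G$ together with all values $v_j(g_1,\dots,g_{k_j})$, $(g_1,\dots,g_{k_j})\in G^{k_j}$, of finitely many words $v_1,\dots,v_p$ (each $v_j$ an element of a free group of rank $k_j$). If $G$ has CFQ (respectively ReFQ, respectively co-ReFQ), then so does $H$.
   Context: Let $G$ be generated by a finite set $S$. A marked finite group is a pair $(F,f)$ with $F$ a finite group (given by its multiplication table) and $f:S\to F$ a function. $G$ has CFQ if there is an algorithm which, given $(F,f)$, decides whether $f$ extends to a group homomorphism $G\to F$; ReFQ if there is an algorithm halting exactly on those $(F,f)$ for which $f$ extends; co-ReFQ if there is an algorithm halting exactly on those $(F,f)$ for which $f$ does not extend. These properties are independent of the finite generating set chosen. *)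

theory Defs
  imports "HOL-Algebra.Algebra" "HOL-Library.Nat_Bijection"
begin

datatype recf = Zero | Succ | Proj nat | Comp recf "recf list" | PrimRec recf recf | Minim recf

definition arg :: "nat \<Rightarrow> nat list \<Rightarrow> nat" where
  "arg i xs = (if i < length xs then xs ! i else 0)"

inductive eval :: "recf \<Rightarrow> nat list \<Rightarrow> nat \<Rightarrow> bool" where
  eval_Zero: "eval Zero xs 0"
| eval_Succ: "eval Succ xs (Suc (arg 0 xs))"
| eval_Proj: "eval (Proj i) xs (arg i xs)"
| eval_Comp: "list_all2 (\<lambda>g y. eval g xs y) gs ys \<Longrightarrow> eval f ys z \<Longrightarrow> eval (Comp f gs) xs z"
| eval_Pr0: "eval f xs z \<Longrightarrow> eval (PrimRec f g) (0 # xs) z"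
| eval_PrS: "eval (PrimRec f g) (n # xs) y \<Longrightarrow> eval g (y # n # xs) z
             \<Longrightarrow> eval (PrimRec f g) (Suc n # xs) z"
| eval_Mn: "eval f (n # xs) 0 \<Longrightarrow> (\<forall>m<n. \<exists>v. eval f (m # xs) v \<and> v > 0)
             \<Longrightarrow> eval (Minim f) xs n"

definition halts :: "recf \<Rightarrow> nat \<Rightarrow> bool" where
  "halts t x \<longleftrightarrow> (\<exists>v. eval t [x] v)"

definition tbl_mult :: "nat \<Rightarrow> nat list \<Rightarrow> nat \<Rightarrow> nat \<Rightarrow> nat" where
  "tbl_mult n tab i j = tab ! (i * n + j)"

definition tbl_grp :: "nat \<Rightarrow> nat list \<Rightarrow> nat monoid" where
  "tbl_grp n tab = \<lparr> carrier = {..<n}, monoid.mult = tbl_mult n tab,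
     one = (SOME e. e < n \<and> (\<forall>x<n. tbl_mult n tab e x = x \<and> tbl_mult n tab x e = x)) \<rparr>"

text \<open>Valid input: a multiplication table of a group of order n, and a marking
  (a list of elements, one for each of the k generators).\<close>
definition valid_marked :: "nat \<Rightarrow> nat \<Rightarrow> nat list \<Rightarrow> nat list \<Rightarrow> bool" where
  "valid_marked k n tab fl \<longleftrightarrow> length tab = n * n \<and> (\<forall>x\<in>set tab. x < n)
     \<and> group (tbl_grp n tab) \<and> length fl = k \<and> (\<forall>x\<in>set fl. x < n)"

definition code :: "nat \<Rightarrow> nat list \<Rightarrow> nat list \<Rightarrow> nat" where
  "code n tab fl = prod_encode (n, prod_encode (list_encode tab, list_encode fl))"

definition extends_hom :: "('a, 'b) monoid_scheme \<Rightarrow> 'a list \<Rightarrow> nat \<Rightarrow> nat list \<Rightarrow> nat list \<Rightarrow> bool" where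
  "extends_hom G s n tab fl \<longleftrightarrow>
     (\<exists>h \<in> hom G (tbl_grp n tab). \<forall>i<length s. h (s ! i) = fl ! i)"

definition gen_list :: "('a, 'b) monoid_scheme \<Rightarrow> 'a list \<Rightarrow> bool" where
  "gen_list G s \<longleftrightarrow> set s \<subseteq> carrier G \<and> generate G (set s) = carrier G"

definition CFQ :: "('a, 'b) monoid_scheme \<Rightarrow> bool" where
  "CFQ G \<longleftrightarrow> (\<exists>s. gen_list G s \<and> (\<exists>t. \<forall>n tab fl. valid_marked (length s) n tab fl \<longrightarrow>
      halts t (code n tab fl) \<and> (eval t [code n tab fl] 0 \<longleftrightarrow> extends_hom G s n tab fl)))"

definition ReFQ :: "('a, 'b) monoid_scheme \<Rightarrow> bool" where
  "ReFQ G \<longleftrightarrow> (\<exists>s. gen_list G s \<and> (\<exists>t. \<forall>n tab fl. valid_marked (length s) n tab fl \<longrightarrow>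
      (halts t (code n tab fl) \<longleftrightarrow> extends_hom G s n tab fl)))"

definition coReFQ :: "('a, 'b) monoid_scheme \<Rightarrow> bool" where
  "coReFQ G \<longleftrightarrow> (\<exists>s. gen_list G s \<and> (\<exists>t. \<forall>n tab fl. valid_marked (length s) n tab fl \<longrightarrow>
      (halts t (code n tab fl) \<longleftrightarrow> \<not> extends_hom G s n tab fl)))"

text \<open>A word in the free group on generators 0..k-1: list of letters (i, b), b = True meaning x_i^-1.\<close>
definition word_eval :: "('a, 'b) monoid_scheme \<Rightarrow> (nat \<times> bool) list \<Rightarrow> (nat \<Rightarrow> 'a) \<Rightarrow> 'a" where
  "word_eval G w g = foldr (\<lambda>(i, b) x. (if b then inv\<^bsub>G\<^esub> (g i) else g i) \<otimes>\<^bsub>G\<^esub> x) w \<one>\<^bsub>G\<^esub>"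

definition word_values :: "('a, 'b) monoid_scheme \<Rightarrow> nat \<Rightarrow> (nat \<times> bool) list \<Rightarrow> 'a set" where
  "word_values G k w = {word_eval G w g | g. \<forall>i<k. g i \<in> carrier G}"

definition normal_closure :: "('a, 'b) monoid_scheme \<Rightarrow> 'a set \<Rightarrow> 'a set" where
  "normal_closure G A = generate G {x \<otimes>\<^bsub>G\<^esub> a \<otimes>\<^bsub>G\<^esub> inv\<^bsub>G\<^esub> x | x a. x \<in> carrier G \<and> a \<in> A}"

end

theory Submission
  imports Defs
begin

text \<open>A marking f of the generators extends to a homomorphism G/K \<rightarrow> F iff it extends to some
  h : G \<rightarrow> F whose kernel contains K, i.e. which kills every r_i and every value of every v_j.
  As h(G) is the subgroup generated by f(S), this says that each r_i, written once and for all as a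
  word in S, evaluates to 1 under f, and that each v_j vanishes on all tuples from that subgroup.
  Given the multiplication table of F this is decidable: the subgroup is the closure of {1} under
  right multiplication by f(S) and its inverses, reached after |F| steps, and there are finitely
  many tuples. An algorithm for G/K runs the one for G alongside this total test, combining them by
  conjunction of the answers (CFQ), by waiting for both (ReFQ), or by waiting for either the
  algorithm for G or a failure of the test (co-ReFQ).\<close>

section \<open>Partial recursive programs\<close>

lemma arg_Cons_0 [simp]: "arg 0 (x # xs) = x"
  by (simp add: arg_def)

lemma arg_Cons_Suc [simp]: "arg (Suc i) (x # xs) = arg i xs"
  by (simp add: arg_def)

lemma arg_Cons_numeral [simp]: "arg (numeral k) (x # xs) = arg (pred_numeral k) xs"
  by (simp add: numeral_eq_Suc)

lemma eval_deterministic: "eval t xs v \<Longrightarrow> eval t xs w \<Longrightarrow> v = w"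
proof (induction arbitrary: w rule: eval.induct)
  case (eval_Zero xs)
  then show ?case by (cases rule: eval.cases) auto
next
  case (eval_Succ xs)
  then show ?case by (cases rule: eval.cases) auto
next
  case (eval_Proj i xs)
  then show ?case by (cases rule: eval.cases) auto
next
  case (eval_Comp xs gs ys f z)
  from eval_Comp.prems obtain ys' where ys': "list_all2 (\<lambda>g y. eval g xs y) gs ys'" "eval f ys' w"
    by (cases rule: eval.cases) auto
  have "ys = ys'"
    using eval_Comp.IH(1) ys'(1) by (induction gs arbitrary: ys ys') (auto simp: list_all2_Cons1)
  then show ?case using eval_Comp.IH(2) ys'(2) by blast
next
  case (eval_PrS f g n xs y z)
  from eval_PrS.prems obtain y' where "eval (PrimRec f g) (n # xs) y'" "eval g (y' # n # xs) w"
    by (cases rule: eval.cases) auto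
  then show ?case using eval_PrS.IH by metis
next
  case (eval_Pr0 f xs z g)
  from eval_Pr0.prems show ?case by (cases rule: eval.cases) (auto dest: eval_Pr0.IH)
next
  case (eval_Mn f n xs)
  from eval_Mn.prems obtain n' where n': "eval f (n' # xs) 0" "\<forall>m<n'. \<exists>v. eval f (m # xs) v \<and> v > 0"
    and "w = n'"
    by (cases rule: eval.cases) auto
  show ?case
  proof (rule linorder_cases[of n n'])
    assume "n < n'"
    then show ?thesis using n'(2) eval_Mn.IH(1) by fastforce
  next
    assume "n' < n"
    then show ?thesis using n'(1) eval_Mn.IH(2) by fastforce
  qed (use \<open>w = n'\<close> in simp)
qed

definition computes :: "recf \<Rightarrow> (nat list \<Rightarrow> nat) \<Rightarrow> bool" where
  "computes t F \<longleftrightarrow> (\<forall>xs. eval t xs (F xs))"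

lemma computes_ext: "computes t F \<Longrightarrow> (\<And>xs. F xs = G xs) \<Longrightarrow> computes t G"
  by (simp add: computes_def)

lemma computes_evalD: "computes t F \<Longrightarrow> eval t xs v \<Longrightarrow> v = F xs"
  unfolding computes_def using eval_deterministic by blast

lemma computes_Zero: "computes Zero (\<lambda>_. 0)"
  by (simp add: computes_def eval_Zero)

lemma computes_Succ: "computes Succ (\<lambda>xs. Suc (arg 0 xs))"
  by (simp add: computes_def eval_Succ)

lemma computes_Proj: "computes (Proj i) (arg i)"
  by (simp add: computes_def eval_Proj)

lemma computes_Comp1: "computes f F \<Longrightarrow> computes a A \<Longrightarrow> computes (Comp f [a]) (\<lambda>xs. F [A xs])"
  unfolding computes_def by (auto intro!: eval_Comp)

lemma computes_Comp2:
  "computes f F \<Longrightarrow> computes a A \<Longrightarrow> computes b B \<Longrightarrow> computes (Comp f [a, b]) (\<lambda>xs. F [A xs, B xs])"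
  unfolding computes_def by (auto intro!: eval_Comp)

lemma computes_Comp3:
  "computes f F \<Longrightarrow> computes a A \<Longrightarrow> computes b B \<Longrightarrow> computes c C \<Longrightarrow>
   computes (Comp f [a, b, c]) (\<lambda>xs. F [A xs, B xs, C xs])"
  unfolding computes_def by (auto intro!: eval_Comp)

lemma computes_Minim:
  assumes "computes f F" "\<And>xs. \<exists>n. F (n # xs) = 0"
  shows "computes (Minim f) (\<lambda>xs. LEAST n. F (n # xs) = 0)"
  unfolding computes_def
proof
  fix xs
  have "F ((LEAST n. F (n # xs) = 0) # xs) = 0" using assms(2) by (rule LeastI_ex)
  moreover have "\<forall>m<(LEAST n. F (n # xs) = 0). \<exists>v. eval f (m # xs) v \<and> v > 0"
    using assms(1) not_less_Least unfolding computes_def by blast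
  ultimately show "eval (Minim f) xs (LEAST n. F (n # xs) = 0)"
    using assms(1) unfolding computes_def by (metis eval_Mn)
qed

lemma computes_PrimRec:
  assumes "computes f F" "computes g G" "computes a A" "computes b B"
  shows "computes (Comp (PrimRec f g) [a, b]) (\<lambda>xs. rec_nat (F [B xs]) (\<lambda>k y. G [y, k, B xs]) (A xs))"
  unfolding computes_def
proof
  fix xs
  have "eval (PrimRec f g) [n, B xs] (rec_nat (F [B xs]) (\<lambda>k y. G [y, k, B xs]) n)" for n
    by (induction n) (use assms in \<open>auto simp: computes_def intro: eval_Pr0 eval_PrS\<close>)
  then show "eval (Comp (PrimRec f g) [a, b]) xs (rec_nat (F [B xs]) (\<lambda>k y. G [y, k, B xs]) (A xs))"
    using assms by (auto simp: computes_def intro!: eval_Comp)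
qed

lemma rec_nat_funpow: "rec_nat x (\<lambda>k y. f y) n = (f ^^ n) x"
  by (induction n) auto

lemma rec_nat_pred: "rec_nat 0 (\<lambda>k y. k) n = n - 1"
  by (cases n) auto

definition "pred_prog = Comp (PrimRec Zero (Proj 1)) [Proj 0, Zero]"

lemma computes_pred: "computes pred_prog (\<lambda>xs. arg 0 xs - 1)"
  unfolding pred_prog_def
  by (rule computes_ext[OF computes_PrimRec[OF computes_Zero computes_Proj computes_Proj computes_Zero]])
    (simp add: rec_nat_pred)

definition "add_prog = Comp (PrimRec (Proj 0) (Comp Succ [Proj 0])) [Proj 0, Proj 1]"

lemma computes_add: "computes add_prog (\<lambda>xs. arg 0 xs + arg 1 xs)"
  unfolding add_prog_def
  by (rule computes_ext[OF computes_PrimRec[OF computes_Proj computes_Comp1[OF computes_Succ computes_Proj]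
        computes_Proj computes_Proj]])
    (simp add: rec_nat_funpow Suc_funpow)

lemma rec_nat_monus: "rec_nat x (\<lambda>k y. y - Suc 0) n = x - n"
  by (induction n) auto

lemma rec_nat_mult: "rec_nat 0 (\<lambda>k y. y + b) n = n * b"
  by (induction n) auto

lemma rec_nat_triangle: "rec_nat 0 (\<lambda>k y. Suc (y + k)) n = triangle n"
  by (induction n) auto

lemma rec_nat_power: "rec_nat (Suc 0) (\<lambda>k y. y * x) n = (x::nat) ^ n"
  by (induction n) (auto simp: mult.commute)

definition "monus_prog = Comp (PrimRec (Proj 0) (Comp pred_prog [Proj 0])) [Proj 1, Proj 0]"

lemma computes_monus: "computes monus_prog (\<lambda>xs. arg 0 xs - arg 1 xs)"
  unfolding monus_prog_def
  by (rule computes_ext[OF computes_PrimRec[OF computes_Proj computes_Comp1[OF computes_pred computes_Proj]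
        computes_Proj computes_Proj]])
    (simp add: rec_nat_monus)

definition "mult_prog = Comp (PrimRec Zero (Comp add_prog [Proj 0, Proj 2])) [Proj 0, Proj 1]"

lemma computes_mult: "computes mult_prog (\<lambda>xs. arg 0 xs * arg 1 xs)"
  unfolding mult_prog_def
  by (rule computes_ext[OF computes_PrimRec[OF computes_Zero
        computes_Comp2[OF computes_add computes_Proj computes_Proj] computes_Proj computes_Proj]])
    (simp add: rec_nat_mult)

definition "triangle_prog = Comp (PrimRec Zero (Comp add_prog [Proj 0, Comp Succ [Proj 1]])) [Proj 0, Zero]"

lemma computes_triangle: "computes triangle_prog (\<lambda>xs. triangle (arg 0 xs))"
  unfolding triangle_prog_def
  by (rule computes_ext[OF computes_PrimRec[OF computes_Zero
        computes_Comp2[OF computes_add computes_Proj computes_Comp1[OF computes_Succ computes_Proj]]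
        computes_Proj computes_Zero]])
    (simp add: rec_nat_triangle)

definition "power_prog = Comp (PrimRec (Comp Succ [Zero]) (Comp mult_prog [Proj 0, Proj 2])) [Proj 1, Proj 0]"

lemma computes_power: "computes power_prog (\<lambda>xs. arg 0 xs ^ arg 1 xs)"
  unfolding power_prog_def
  by (rule computes_ext[OF computes_PrimRec[OF computes_Comp1[OF computes_Succ computes_Zero]
        computes_Comp2[OF computes_mult computes_Proj computes_Proj] computes_Proj computes_Proj]])
    (simp add: rec_nat_power)

fun const_prog :: "nat \<Rightarrow> recf" where
  "const_prog 0 = Zero"
| "const_prog (Suc n) = Comp Succ [const_prog n]"

lemma computes_const: "computes (const_prog c) (\<lambda>_. c)"
  by (induction c) (auto intro: computes_Zero computes_ext[OF computes_Comp1[OF computes_Succ]])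

definition decides :: "recf \<Rightarrow> (nat list \<Rightarrow> bool) \<Rightarrow> bool" where
  "decides t P \<longleftrightarrow> (\<exists>F. computes t F \<and> (\<forall>xs. F xs = 0 \<longleftrightarrow> P xs))"

lemma decides_cong: "decides t P \<Longrightarrow> (\<And>xs. P xs = Q xs) \<Longrightarrow> decides t Q"
  by (simp add: decides_def)

lemma decides_Comp2:
  assumes "decides p P" "computes a A" "computes b B"
  shows "decides (Comp p [a, b]) (\<lambda>xs. P [A xs, B xs])"
proof -
  obtain F where "computes p F" "\<And>xs. F xs = 0 \<longleftrightarrow> P xs"
    using assms(1) unfolding decides_def by blast
  then show ?thesis
    unfolding decides_def using computes_Comp2[OF _ assms(2,3)] by blast
qed

lemma decides_Comp3:
  assumes "decides p P" "computes a A" "computes b B" "computes c C"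
  shows "decides (Comp p [a, b, c]) (\<lambda>xs. P [A xs, B xs, C xs])"
proof -
  obtain F where "computes p F" "\<And>xs. F xs = 0 \<longleftrightarrow> P xs"
    using assms(1) unfolding decides_def by blast
  then show ?thesis
    unfolding decides_def using computes_Comp3[OF _ assms(2,3,4)] by blast
qed

lemma decides_True: "decides Zero (\<lambda>_. True)"
  unfolding decides_def by (auto intro!: exI computes_Zero)

definition "eq_prog a b = Comp add_prog [Comp monus_prog [a, b], Comp monus_prog [b, a]]"

lemma decides_eq:
  assumes "computes a A" "computes b B"
  shows "decides (eq_prog a b) (\<lambda>xs. A xs = B xs)"
  unfolding decides_def eq_prog_def
  by (rule exI, rule conjI, rule computes_Comp2[OF computes_add computes_Comp2[OF computes_monus assms]
        computes_Comp2[OF computes_monus assms(2,1)]]) auto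

definition "lt_prog a b = Comp monus_prog [Comp Succ [a], b]"

lemma decides_less:
  assumes "computes a A" "computes b B"
  shows "decides (lt_prog a b) (\<lambda>xs. A xs < B xs)"
  unfolding decides_def lt_prog_def
  by (rule exI, rule conjI, rule computes_Comp2[OF computes_monus computes_Comp1[OF computes_Succ assms(1)] assms(2)])
    auto

definition "conj_prog a b = Comp add_prog [a, b]"

lemma decides_conj:
  assumes "decides a P" "decides b Q"
  shows "decides (conj_prog a b) (\<lambda>xs. P xs \<and> Q xs)"
proof -
  obtain F G where "computes a F" "\<And>xs. F xs = 0 \<longleftrightarrow> P xs" "computes b G" "\<And>xs. G xs = 0 \<longleftrightarrow> Q xs"
    using assms unfolding decides_def by blast
  then show ?thesis
    unfolding decides_def conj_prog_def
    by (intro exI[of _ "\<lambda>xs. F xs + G xs"] conjI computes_ext[OF computes_Comp2[OF computes_add]]) auto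
qed

definition "disj_prog a b = Comp mult_prog [a, b]"

lemma decides_disj:
  assumes "decides a P" "decides b Q"
  shows "decides (disj_prog a b) (\<lambda>xs. P xs \<or> Q xs)"
proof -
  obtain F G where "computes a F" "\<And>xs. F xs = 0 \<longleftrightarrow> P xs" "computes b G" "\<And>xs. G xs = 0 \<longleftrightarrow> Q xs"
    using assms unfolding decides_def by blast
  then show ?thesis
    unfolding decides_def disj_prog_def
    by (intro exI[of _ "\<lambda>xs. F xs * G xs"] conjI computes_ext[OF computes_Comp2[OF computes_mult]]) auto
qed

definition "neg_prog a = Comp monus_prog [const_prog 1, a]"

lemma decides_neg:
  assumes "decides a P"
  shows "decides (neg_prog a) (\<lambda>xs. \<not> P xs)"
proof -
  obtain F where F: "computes a F" "\<And>xs. F xs = 0 \<longleftrightarrow> P xs"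
    using assms unfolding decides_def by blast
  have "computes (neg_prog a) (\<lambda>xs. 1 - F xs)"
    unfolding neg_prog_def by (rule computes_ext[OF computes_Comp2[OF computes_monus computes_const F(1)]]) simp
  moreover have "1 - F xs = 0 \<longleftrightarrow> \<not> P xs" for xs
    using F(2)[of xs] by linarith
  ultimately show ?thesis unfolding decides_def by blast
qed

definition "imp_prog a b = disj_prog (neg_prog a) b"

lemma decides_imp: "decides a P \<Longrightarrow> decides b Q \<Longrightarrow> decides (imp_prog a b) (\<lambda>xs. P xs \<longrightarrow> Q xs)"
  unfolding imp_prog_def by (rule decides_cong[OF decides_disj[OF decides_neg]]) auto

definition "iff_prog a b = conj_prog (imp_prog a b) (imp_prog b a)"

lemma decides_iff: "decides a P \<Longrightarrow> decides b Q \<Longrightarrow> decides (iff_prog a b) (\<lambda>xs. P xs \<longleftrightarrow> Q xs)"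
  unfolding iff_prog_def by (rule decides_cong[OF decides_conj[OF decides_imp decides_imp]]) auto

fun all_prog :: "recf list \<Rightarrow> recf" where
  "all_prog [] = Zero"
| "all_prog (p # ps) = conj_prog p (all_prog ps)"

lemma decides_all:
  "(\<And>a. a \<in> set as \<Longrightarrow> decides (f a) (P a)) \<Longrightarrow> decides (all_prog (map f as)) (\<lambda>xs. \<forall>a\<in>set as. P a xs)"
proof (induction as)
  case Nil
  then show ?case by (simp add: decides_True)
next
  case (Cons a as)
  have "decides (all_prog (map f (a # as))) (\<lambda>xs. P a xs \<and> (\<forall>a\<in>set as. P a xs))"
    using decides_conj[OF Cons.prems[of a] Cons.IH] Cons.prems by simp
  then show ?case by (rule decides_cong) simp
qed

lemma computes_Least:
  assumes "decides p P" "\<And>xs. \<exists>q. P (q # xs)"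
  shows "computes (Minim p) (\<lambda>xs. LEAST q. P (q # xs))"
proof -
  obtain F where F: "computes p F" "\<And>xs. F xs = 0 \<longleftrightarrow> P xs"
    using assms(1) unfolding decides_def by blast
  show ?thesis by (rule computes_ext[OF computes_Minim[OF F(1)]]) (use assms(2) F(2) in auto)
qed

text \<open>The bound B of a bounded search is supplied twice: by b0 on the arguments xs, and by b on
  the extended arguments q # xs seen inside the search.\<close>

definition "bounded_least_prog b p = Minim (Comp mult_prog [Comp monus_prog [b, Proj 0], p])"

lemma computes_bounded_least:
  assumes "computes b BB" "\<And>q xs. BB (q # xs) = B xs" "decides p P"
  shows "computes (bounded_least_prog b p) (\<lambda>xs. LEAST q. B xs \<le> q \<or> P (q # xs))"
proof -
  obtain F where F: "computes p F" "\<And>xs. F xs = 0 \<longleftrightarrow> P xs"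
    using assms(3) unfolding decides_def by blast
  have "computes (Comp mult_prog [Comp monus_prog [b, Proj 0], p]) (\<lambda>ys. (BB ys - arg 0 ys) * F ys)"
    by (rule computes_ext[OF computes_Comp2[OF computes_mult
          computes_Comp2[OF computes_monus assms(1) computes_Proj] F(1)]]) simp
  then have "computes (bounded_least_prog b p) (\<lambda>xs. LEAST n. (BB (n # xs) - arg 0 (n # xs)) * F (n # xs) = 0)"
    unfolding bounded_least_prog_def
    by (rule computes_Minim) (use assms(2) in \<open>auto intro: exI[of _ "B xs" for xs]\<close>)
  then show ?thesis by (rule computes_ext) (simp add: assms(2) F(2))
qed

definition "ball_prog b0 b p = Comp monus_prog [b0, bounded_least_prog b (neg_prog p)]"

lemma decides_ball:
  assumes "computes b0 B" "computes b BB" "\<And>q xs. BB (q # xs) = B xs" "decides p P"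
  shows "decides (ball_prog b0 b p) (\<lambda>xs. \<forall>q < B xs. P (q # xs))"
proof -
  let ?L = "\<lambda>xs. LEAST q. B xs \<le> q \<or> \<not> P (q # xs)"
  have "computes (ball_prog b0 b p) (\<lambda>xs. B xs - ?L xs)"
    unfolding ball_prog_def
    by (rule computes_ext[OF computes_Comp2[OF computes_monus assms(1)
          computes_bounded_least[OF assms(2,3) decides_neg[OF assms(4)]]]]) simp
  moreover have "B xs - ?L xs = 0 \<longleftrightarrow> (\<forall>q < B xs. P (q # xs))" for xs
  proof
    assume "B xs - ?L xs = 0"
    then show "\<forall>q < B xs. P (q # xs)"
      using Least_le[of "\<lambda>q. B xs \<le> q \<or> \<not> P (q # xs)"] by (meson diff_is_0_eq le_trans not_le)
  next
    assume "\<forall>q < B xs. P (q # xs)"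
    then have "?L xs = B xs"
      by (intro Least_equality) (auto simp: not_le[symmetric])
    then show "B xs - ?L xs = 0" by simp
  qed
  ultimately show ?thesis unfolding decides_def by blast
qed

definition "bex_prog b0 b p = neg_prog (ball_prog b0 b (neg_prog p))"

lemma decides_bex:
  assumes "computes b0 B" "computes b BB" "\<And>q xs. BB (q # xs) = B xs" "decides p P"
  shows "decides (bex_prog b0 b p) (\<lambda>xs. \<exists>q < B xs. P (q # xs))"
  unfolding bex_prog_def
  by (rule decides_cong[OF decides_neg[OF decides_ball[OF assms(1-3) decides_neg[OF assms(4)]]]]) auto

lemma Least_less_Suc_mult_eq_div:
  "(LEAST q. b = 0 \<or> a < Suc q * b) = a div (b::nat)"
proof (cases "b = 0")
  case False
  show ?thesis
  proof (rule Least_equality)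
    have "a div b * b + a mod b = a" "a mod b < b"
      using False by simp_all
    then show "b = 0 \<or> a < Suc (a div b) * b"
      unfolding mult_Suc by linarith
  next
    fix q assume "b = 0 \<or> a < Suc q * b"
    then show "a div b \<le> q"
      using False less_mult_imp_div_less[of a "Suc q" b] by auto
  qed
qed simp

definition "div_prog =
  Minim (disj_prog (eq_prog (Proj 2) Zero) (lt_prog (Proj 1) (Comp mult_prog [Comp Succ [Proj 0], Proj 2])))"

lemma computes_div: "computes div_prog (\<lambda>xs. arg 0 xs div arg 1 xs)"
proof -
  have "\<exists>q. b = 0 \<or> a < Suc q * b" for a b :: nat
    by (cases b) (auto intro: exI[of _ a])
  then show ?thesis
    unfolding div_prog_def
    by (intro computes_ext[OF computes_Least[OF decides_disj[OF decides_eq[OF computes_Proj computes_Zero]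
          decides_less[OF computes_Proj computes_Comp2[OF computes_mult computes_Comp1[OF computes_Succ
          computes_Proj] computes_Proj]]]]])
      (simp_all del: mult_Suc add: Least_less_Suc_mult_eq_div)
qed

definition "mod_prog = Comp monus_prog [Proj 0, Comp mult_prog [Proj 1, div_prog]]"

lemma computes_mod: "computes mod_prog (\<lambda>xs. arg 0 xs mod arg 1 xs)"
  unfolding mod_prog_def
  by (rule computes_ext[OF computes_Comp2[OF computes_monus computes_Proj
        computes_Comp2[OF computes_mult computes_Proj computes_div]]])
    (simp add: minus_mult_div_eq_mod)

definition "bit_prog =
  eq_prog (Comp mod_prog [Comp div_prog [Proj 0, Comp power_prog [const_prog 2, Proj 1]], const_prog 2]) (const_prog 1)"

lemma decides_bit: "decides bit_prog (\<lambda>xs. bit (arg 0 xs) (arg 1 xs))"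
  unfolding bit_prog_def
  by (rule decides_cong[OF decides_eq[OF computes_Comp2[OF computes_mod computes_Comp2[OF computes_div
        computes_Proj computes_Comp2[OF computes_power computes_const computes_Proj]] computes_const]
        computes_const]])
    (simp add: bit_iff_odd odd_iff_mod_2_eq_one)

lemma ex_bits_below: "\<exists>T::nat. \<forall>z<n. bit T z \<longleftrightarrow> b z"
proof (induction n arbitrary: b)
  case (Suc n)
  obtain T :: nat where "\<forall>z<n. bit T z \<longleftrightarrow> b (Suc z)"
    using Suc.IH[of "\<lambda>z. b (Suc z)"] by blast
  moreover have "(of_bool (b 0) + 2 * T) div 2 = T" "bit (of_bool (b 0) + 2 * T) 0 \<longleftrightarrow> b 0"
    by (simp_all add: bit_0)
  ultimately have "\<forall>z<Suc n. bit (of_bool (b 0) + 2 * T) z \<longleftrightarrow> b z"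
    by (auto simp: less_Suc_eq_0_disj bit_Suc simp del: of_bool_eq)
  then show ?case by blast
qed simp

section \<open>Decoding pairs and lists\<close>

lemma triangle_mono: "m \<le> n \<Longrightarrow> triangle m \<le> triangle n"
  by (induction n) (auto simp: le_Suc_eq)

lemma prod_decode_eq_triangle:
  "prod_decode x = (a, b) \<Longrightarrow> x = triangle (a + b) + a"
  using prod_decode_inverse[of x] by (simp add: prod_encode_def)

lemma Least_triangle_eq_diagonal:
  "(LEAST q. x < Suc (triangle q + q)) = fst (prod_decode x) + snd (prod_decode x)"
proof -
  obtain a b where ab: "prod_decode x = (a, b)" by fastforce
  have "(LEAST q. x < Suc (triangle q + q)) = a + b"
  proof (rule Least_equality)
    show "x < Suc (triangle (a + b) + (a + b))"
      using prod_decode_eq_triangle[OF ab] by simp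
  next
    fix q assume q: "x < Suc (triangle q + q)"
    show "a + b \<le> q"
    proof (rule ccontr)
      assume "\<not> a + b \<le> q"
      then have "triangle (Suc q) \<le> triangle (a + b)"
        by (intro triangle_mono) simp
      then show False
        using q prod_decode_eq_triangle[OF ab] by simp
    qed
  qed
  then show ?thesis using ab by simp
qed

lemma prod_decode_diff_triangle:
  "x - triangle (fst (prod_decode x) + snd (prod_decode x)) = fst (prod_decode x)"
  using prod_decode_eq_triangle[of x "fst (prod_decode x)" "snd (prod_decode x)"] by simp

definition "diagonal_prog =
  Minim (lt_prog (Proj 1) (Comp Succ [Comp add_prog [Comp triangle_prog [Proj 0], Proj 0]]))"

lemma computes_diagonal:
  "computes diagonal_prog (\<lambda>xs. fst (prod_decode (arg 0 xs)) + snd (prod_decode (arg 0 xs)))"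
proof -
  have "\<exists>q. x < Suc (triangle q + q)" for x
    by (rule exI[of _ x]) simp
  then show ?thesis
    unfolding diagonal_prog_def
    by (intro computes_ext[OF computes_Least[OF decides_less[OF computes_Proj computes_Comp1[OF computes_Succ
          computes_Comp2[OF computes_add computes_Comp1[OF computes_triangle computes_Proj] computes_Proj]]]]])
      (simp_all add: Least_triangle_eq_diagonal)
qed

definition "fst_decode_prog = Comp monus_prog [Proj 0, Comp triangle_prog [diagonal_prog]]"

lemma computes_fst_decode: "computes fst_decode_prog (\<lambda>xs. fst (prod_decode (arg 0 xs)))"
  unfolding fst_decode_prog_def
  by (rule computes_ext[OF computes_Comp2[OF computes_monus computes_Proj
        computes_Comp1[OF computes_triangle computes_diagonal]]])
    (simp add: prod_decode_diff_triangle)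

definition "snd_decode_prog = Comp monus_prog [diagonal_prog, fst_decode_prog]"

lemma computes_snd_decode: "computes snd_decode_prog (\<lambda>xs. snd (prod_decode (arg 0 xs)))"
  unfolding snd_decode_prog_def
  by (rule computes_ext[OF computes_Comp2[OF computes_monus computes_diagonal computes_fst_decode]]) simp

definition list_code_tl :: "nat \<Rightarrow> nat" where
  "list_code_tl L = snd (prod_decode (L - 1))"

definition list_code_nth :: "nat \<Rightarrow> nat \<Rightarrow> nat" where
  "list_code_nth L i = fst (prod_decode ((list_code_tl ^^ i) L - 1))"

lemma list_code_tl_iterate:
  "i \<le> length l \<Longrightarrow> (list_code_tl ^^ i) (list_encode l) = list_encode (drop i l)"
proof (induction i)
  case (Suc i)
  then have "drop i l = l ! i # drop (Suc i) l" by (simp add: Cons_nth_drop_Suc)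
  then show ?case using Suc by (simp add: list_code_tl_def)
qed simp

lemma list_code_nth_list_encode: "i < length l \<Longrightarrow> list_code_nth (list_encode l) i = l ! i"
proof -
  assume i: "i < length l"
  then have "drop i l = l ! i # drop (Suc i) l" by (simp add: Cons_nth_drop_Suc)
  then show ?thesis using i by (simp add: list_code_nth_def list_code_tl_iterate)
qed

definition "list_nth_prog =
  Comp fst_decode_prog [Comp pred_prog
    [Comp (PrimRec (Proj 0) (Comp snd_decode_prog [Comp pred_prog [Proj 0]])) [Proj 1, Proj 0]]]"

lemma computes_list_nth: "computes list_nth_prog (\<lambda>xs. list_code_nth (arg 0 xs) (arg 1 xs))"
  unfolding list_nth_prog_def
  by (rule computes_ext[OF computes_Comp1[OF computes_fst_decode computes_Comp1[OF computes_pred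
        computes_PrimRec[OF computes_Proj computes_Comp1[OF computes_snd_decode computes_Comp1[OF computes_pred
        computes_Proj]] computes_Proj computes_Proj]]]])
    (simp add: list_code_nth_def list_code_tl_def[abs_def] rec_nat_funpow)

definition code_order :: "nat \<Rightarrow> nat" where
  "code_order x = fst (prod_decode x)"

definition code_table :: "nat \<Rightarrow> nat" where
  "code_table x = fst (prod_decode (snd (prod_decode x)))"

definition code_marking :: "nat \<Rightarrow> nat" where
  "code_marking x = snd (prod_decode (snd (prod_decode x)))"

definition code_mult :: "nat \<Rightarrow> nat \<Rightarrow> nat \<Rightarrow> nat" where
  "code_mult x a b = list_code_nth (code_table x) (a * code_order x + b)"

definition code_one :: "nat \<Rightarrow> nat" where
  "code_one x = (LEAST e. code_order x \<le> e \<or> code_mult x e e = e)"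

definition code_inv :: "nat \<Rightarrow> nat \<Rightarrow> nat" where
  "code_inv x a = (LEAST y. code_order x \<le> y \<or> code_mult x a y = code_one x)"

definition code_gen :: "nat \<Rightarrow> nat \<Rightarrow> nat" where
  "code_gen x i = list_code_nth (code_marking x) i"

definition "order_prog = fst_decode_prog"

lemma computes_order: "computes order_prog (\<lambda>xs. code_order (arg 0 xs))"
  unfolding order_prog_def code_order_def by (rule computes_fst_decode)

definition "table_prog = Comp fst_decode_prog [snd_decode_prog]"

lemma computes_table: "computes table_prog (\<lambda>xs. code_table (arg 0 xs))"
  unfolding table_prog_def code_table_def
  by (rule computes_ext[OF computes_Comp1[OF computes_fst_decode computes_snd_decode]]) simp

definition "marking_prog = Comp snd_decode_prog [snd_decode_prog]"

lemma computes_marking: "computes marking_prog (\<lambda>xs. code_marking (arg 0 xs))"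
  unfolding marking_prog_def code_marking_def
  by (rule computes_ext[OF computes_Comp1[OF computes_snd_decode computes_snd_decode]]) simp

definition "code_mult_prog =
  Comp list_nth_prog [Comp table_prog [Proj 0],
    Comp add_prog [Comp mult_prog [Proj 1, Comp order_prog [Proj 0]], Proj 2]]"

lemma computes_code_mult: "computes code_mult_prog (\<lambda>xs. code_mult (arg 0 xs) (arg 1 xs) (arg 2 xs))"
  unfolding code_mult_prog_def code_mult_def
  by (rule computes_ext[OF computes_Comp2[OF computes_list_nth computes_Comp1[OF computes_table computes_Proj]
      computes_Comp2[OF computes_add computes_Comp2[OF computes_mult computes_Proj
      computes_Comp1[OF computes_order computes_Proj]] computes_Proj]]]) simp

definition "code_one_prog =
  bounded_least_prog (Comp order_prog [Proj 1]) (eq_prog (Comp code_mult_prog [Proj 1, Proj 0, Proj 0]) (Proj 0))"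

lemma computes_code_one: "computes code_one_prog (\<lambda>xs. code_one (arg 0 xs))"
  unfolding code_one_prog_def code_one_def
  by (rule computes_ext[OF computes_bounded_least[where B="\<lambda>xs. code_order (arg 0 xs)",
      OF computes_Comp1[OF computes_order computes_Proj] _
      decides_eq[OF computes_Comp3[OF computes_code_mult computes_Proj computes_Proj computes_Proj]
      computes_Proj]]]) simp_all

definition "code_inv_prog =
  bounded_least_prog (Comp order_prog [Proj 1])
    (eq_prog (Comp code_mult_prog [Proj 1, Proj 2, Proj 0]) (Comp code_one_prog [Proj 1]))"

lemma computes_code_inv: "computes code_inv_prog (\<lambda>xs. code_inv (arg 0 xs) (arg 1 xs))"
  unfolding code_inv_prog_def code_inv_def
  by (rule computes_ext[OF computes_bounded_least[where B="\<lambda>xs. code_order (arg 0 xs)",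
      OF computes_Comp1[OF computes_order computes_Proj] _
      decides_eq[OF computes_Comp3[OF computes_code_mult computes_Proj computes_Proj computes_Proj]
      computes_Comp1[OF computes_code_one computes_Proj]]]]) simp_all

definition "code_gen_prog = Comp list_nth_prog [Comp marking_prog [Proj 0], Proj 1]"

lemma computes_code_gen: "computes code_gen_prog (\<lambda>xs. code_gen (arg 0 xs) (arg 1 xs))"
  unfolding code_gen_prog_def code_gen_def
  by (rule computes_ext[OF computes_Comp2[OF computes_list_nth computes_Comp1[OF computes_marking computes_Proj]
      computes_Proj]]) simp

lemma code_order_code [simp]: "code_order (code n tab fl) = n"
  by (simp add: code_order_def code_def)

lemma code_table_code [simp]: "code_table (code n tab fl) = list_encode tab"
  by (simp add: code_table_def code_def)

lemma code_marking_code [simp]: "code_marking (code n tab fl) = list_encode fl"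
  by (simp add: code_marking_def code_def)

lemma carrier_tbl_grp [simp]: "carrier (tbl_grp n tab) = {..<n}"
  by (simp add: tbl_grp_def)

lemma tbl_grp_mult: "x \<otimes>\<^bsub>tbl_grp n tab\<^esub> y = tab ! (x * n + y)"
  by (simp add: tbl_grp_def tbl_mult_def)

lemma table_index_less:
  assumes "a < (n::nat)" "b < n"
  shows "a * n + b < n * n"
proof -
  have "a * n + b < Suc a * n" using assms(2) by simp
  also have "\<dots> \<le> n * n" using assms(1) by (intro mult_le_mono1) simp
  finally show ?thesis .
qed

locale marked_table =
  fixes k n tab fl
  assumes valid: "valid_marked k n tab fl"
begin

abbreviation "F \<equiv> tbl_grp n tab"

sublocale F: group F
  using valid by (simp add: valid_marked_def)

lemma length_tab: "length tab = n * n"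
  and length_fl: "length fl = k"
  and marking_less: "\<forall>x\<in>set fl. x < n"
  using valid by (auto simp: valid_marked_def)

lemma code_mult_eq: "a < n \<Longrightarrow> b < n \<Longrightarrow> code_mult (code n tab fl) a b = a \<otimes>\<^bsub>F\<^esub> b"
  by (simp add: code_mult_def list_code_nth_list_encode length_tab table_index_less tbl_grp_mult)

lemma one_less: "\<one>\<^bsub>F\<^esub> < n"
  using F.one_closed by simp

lemma inv_less: "a < n \<Longrightarrow> inv\<^bsub>F\<^esub> a < n"
  using F.inv_closed[of a] by simp

lemma code_one_eq: "code_one (code n tab fl) = \<one>\<^bsub>F\<^esub>"
  unfolding code_one_def
proof (rule Least_equality)
  fix y assume "code_order (code n tab fl) \<le> y \<or> code_mult (code n tab fl) y y = y"
  then show "\<one>\<^bsub>F\<^esub> \<le> y"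
    using one_less F.l_cancel_one[of y y] by (cases "y < n") (auto simp: code_mult_eq)
qed (simp add: one_less code_mult_eq)

lemma code_inv_eq: "a < n \<Longrightarrow> code_inv (code n tab fl) a = inv\<^bsub>F\<^esub> a"
  unfolding code_inv_def
proof (rule Least_equality)
  fix y assume a: "a < n"
    and "code_order (code n tab fl) \<le> y \<or> code_mult (code n tab fl) a y = code_one (code n tab fl)"
  then have "y < n \<Longrightarrow> a \<otimes>\<^bsub>F\<^esub> y = \<one>\<^bsub>F\<^esub>"
    by (simp add: code_mult_eq code_one_eq)
  then show "inv\<^bsub>F\<^esub> a \<le> y"
    using a inv_less[OF a] F.inv_equality[of a y] F.inv_inv[of y] by (cases "y < n") auto
qed (simp_all add: inv_less code_mult_eq code_one_eq)

lemma code_gen_eq: "i < k \<Longrightarrow> code_gen (code n tab fl) i = fl ! i"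
  by (simp add: code_gen_def list_code_nth_list_encode length_fl)

end

lemma word_eval_Nil [simp]: "word_eval G [] g = \<one>\<^bsub>G\<^esub>"
  by (simp add: word_eval_def)

lemma word_eval_Cons [simp]:
  "word_eval G ((i, b) # w) g = (if b then inv\<^bsub>G\<^esub> (g i) else g i) \<otimes>\<^bsub>G\<^esub> word_eval G w g"
  by (simp add: word_eval_def)

lemma word_eval_cong: "(\<forall>(i, b)\<in>set w. g i = g' i) \<Longrightarrow> word_eval G w g = word_eval G w g'"
  by (induction w) auto

lemma (in group) word_eval_closed: "(\<forall>(i, b)\<in>set w. g i \<in> carrier G) \<Longrightarrow> word_eval G w g \<in> carrier G"
  by (induction w) auto

lemma (in group) word_eval_append:
  assumes "\<forall>(i, b)\<in>set w1. g i \<in> carrier G" "\<forall>(i, b)\<in>set w2. g i \<in> carrier G"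
  shows "word_eval G (w1 @ w2) g = word_eval G w1 g \<otimes> word_eval G w2 g"
  using assms(1)
proof (induction w1)
  case Nil
  then show ?case using word_eval_closed[OF assms(2)] by simp
next
  case (Cons a w1)
  then show ?case
    using word_eval_closed[OF assms(2)] by (cases a) (auto simp: m_assoc word_eval_closed)
qed

lemma (in group_hom) word_eval_hom:
  "\<forall>(i, b)\<in>set w. g i \<in> carrier G \<Longrightarrow> h (word_eval G w g) = word_eval H w (\<lambda>i. h (g i))"
  by (induction w) (auto simp: G.word_eval_closed)

lemma (in group) generate_eq_word_evals:
  assumes "set s \<subseteq> carrier G" "a \<in> generate G (set s)"
  shows "\<exists>w. (\<forall>(i, b)\<in>set w. i < length s) \<and> a = word_eval G w (\<lambda>i. s ! i)"
  using assms(2)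
proof (induction rule: generate.induct)
  case one
  show ?case by (rule exI[of _ "[]"]) simp
next
  case (incl h)
  then obtain i where i: "i < length s" "h = s ! i" by (auto simp: in_set_conv_nth)
  then have "s ! i \<in> carrier G" using assms(1) by auto
  then show ?case using i by (intro exI[of _ "[(i, False)]"]) auto
next
  case (inv h)
  then obtain i where i: "i < length s" "h = s ! i" by (auto simp: in_set_conv_nth)
  then have "s ! i \<in> carrier G" using assms(1) by auto
  then show ?case using i by (intro exI[of _ "[(i, True)]"]) auto
next
  case (eng h1 h2)
  then obtain w1 w2 where "\<forall>(i, b)\<in>set w1. i < length s" "h1 = word_eval G w1 (\<lambda>i. s ! i)"
    "\<forall>(i, b)\<in>set w2. i < length s" "h2 = word_eval G w2 (\<lambda>i. s ! i)"
    by blast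
  moreover from this have "\<forall>(i, b)\<in>set w1. s ! i \<in> carrier G" "\<forall>(i, b)\<in>set w2. s ! i \<in> carrier G"
    using assms(1) by fastforce+
  ultimately show ?case by (intro exI[of _ "w1 @ w2"]) (auto simp: word_eval_append)
qed

definition code_word_eval :: "nat \<Rightarrow> (nat \<times> bool) list \<Rightarrow> (nat \<Rightarrow> nat) \<Rightarrow> nat" where
  "code_word_eval x w g = foldr (\<lambda>(i, b) y. code_mult x (if b then code_inv x (g i) else g i) y) w (code_one x)"

fun word_prog :: "(nat \<Rightarrow> recf) \<Rightarrow> recf \<Rightarrow> (nat \<times> bool) list \<Rightarrow> recf" where
  "word_prog gp xp [] = Comp code_one_prog [xp]"
| "word_prog gp xp ((i, b) # w) =
     Comp code_mult_prog [xp, if b then Comp code_inv_prog [xp, gp i] else gp i, word_prog gp xp w]"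

lemma computes_word:
  assumes "computes xp A" "\<And>i. computes (gp i) (B i)"
  shows "computes (word_prog gp xp w) (\<lambda>xs. code_word_eval (A xs) w (\<lambda>i. B i xs))"
proof (induction w)
  case Nil
  show ?case
    by (simp, rule computes_ext[OF computes_Comp1[OF computes_code_one assms(1)]]) (simp add: code_word_eval_def)
next
  case (Cons a w)
  obtain i b where a: "a = (i, b)" by fastforce
  show ?case
  proof (cases b)
    case True
    then have eq: "word_prog gp xp (a # w) =
        Comp code_mult_prog [xp, Comp code_inv_prog [xp, gp i], word_prog gp xp w]"
      by (simp add: a)
    show ?thesis
      unfolding eq by (rule computes_ext[OF computes_Comp3[OF computes_code_mult assms(1)
            computes_Comp2[OF computes_code_inv assms(1) assms(2)] Cons]]) (simp add: code_word_eval_def a True)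
  next
    case False
    then have eq: "word_prog gp xp (a # w) = Comp code_mult_prog [xp, gp i, word_prog gp xp w]"
      by (simp add: a)
    show ?thesis
      unfolding eq by (rule computes_ext[OF computes_Comp3[OF computes_code_mult assms(1) assms(2) Cons]])
        (simp add: code_word_eval_def a False)
  qed
qed

lemma (in marked_table) code_word_eval_eq:
  "\<forall>(i, b)\<in>set w. g i < n \<Longrightarrow> code_word_eval (code n tab fl) w g = word_eval F w g"
proof (induction w)
  case Nil
  then show ?case by (simp add: code_word_eval_def code_one_eq)
next
  case (Cons a w)
  obtain i b where a: "a = (i, b)" by fastforce
  have "word_eval F w g < n"
    using F.word_eval_closed[of w g] Cons.prems by auto
  then show ?case
    using Cons inv_less[of "g i"] by (auto simp: a code_word_eval_def code_mult_eq code_inv_eq)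
qed

section \<open>The subgroup generated by a marking\<close>

definition gen_step :: "('a, 'b) monoid_scheme \<Rightarrow> 'a set \<Rightarrow> 'a set \<Rightarrow> 'a set" where
  "gen_step G S A = A \<union> {y \<otimes>\<^bsub>G\<^esub> g | y g. y \<in> A \<and> (g \<in> S \<or> g \<in> m_inv G ` S)}"

context group
begin

lemma gen_step_iterate_mono: "(gen_step G S ^^ t) A \<subseteq> (gen_step G S ^^ (t + j)) A"
  by (induction j) (auto simp: gen_step_def)

lemma gen_step_iterate_subset_generate:
  assumes "S \<subseteq> carrier G"
  shows "(gen_step G S ^^ t) {\<one>} \<subseteq> generate G S"
proof (induction t)
  case (Suc t)
  then show ?case
    using assms by (auto simp: gen_step_def intro: generate.eng generate.incl generate.inv)
qed (auto intro: generate.one)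

lemma generate_subset_gen_step_closed:
  assumes S: "S \<subseteq> carrier G" and A: "\<one> \<in> A" "A \<subseteq> carrier G" "gen_step G S A \<subseteq> A"
  shows "generate G S \<subseteq> A"
proof -
  have "\<forall>b\<in>A. b \<otimes> a \<in> A" if "a \<in> generate G S" for a
    using that
  proof (induction rule: generate.induct)
    case one
    then show ?case using A(2) by auto
  next
    case (incl h)
    then show ?case using A(3) unfolding gen_step_def by blast
  next
    case (inv h)
    then show ?case using A(3) unfolding gen_step_def by blast
  next
    case (eng h1 h2)
    then have "h1 \<in> carrier G" "h2 \<in> carrier G" using generate_in_carrier[OF S] by auto
    then show ?case using eng.IH A(2) by (metis m_assoc subsetD)
  qed
  then show ?thesis
    using A(1) generate_in_carrier[OF S] by (metis l_one subsetI)
qed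

lemma card_gen_step_iterate:
  assumes "finite (carrier G)" "S \<subseteq> carrier G"
    and unstable: "(gen_step G S ^^ Suc c) {\<one>} \<noteq> (gen_step G S ^^ c) {\<one>}"
  shows "t \<le> Suc c \<Longrightarrow> Suc t \<le> card ((gen_step G S ^^ t) {\<one>})"
proof (induction t)
  case (Suc t)
  have stable_from: "(gen_step G S ^^ (t + j)) {\<one>} = (gen_step G S ^^ t) {\<one>}"
    if "(gen_step G S ^^ Suc t) {\<one>} = (gen_step G S ^^ t) {\<one>}" for j
    using that by (induction j) auto
  have strict: "(gen_step G S ^^ t) {\<one>} \<subset> (gen_step G S ^^ Suc t) {\<one>}"
  proof
    show "(gen_step G S ^^ t) {\<one>} \<subseteq> (gen_step G S ^^ Suc t) {\<one>}"
      using gen_step_iterate_mono[where S=S and t=t and A="{\<one>}" and j=1] by simp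
    show "(gen_step G S ^^ t) {\<one>} \<noteq> (gen_step G S ^^ Suc t) {\<one>}"
      using stable_from[of "c - t"] stable_from[of "Suc c - t"] Suc.prems unstable
      by (auto simp: Suc_diff_le)
  qed
  have "finite ((gen_step G S ^^ Suc t) {\<one>})"
    using gen_step_iterate_subset_generate[OF assms(2)] generate_incl[OF assms(2)] assms(1)
    by (meson finite_subset subset_trans)
  then have "card ((gen_step G S ^^ t) {\<one>}) < card ((gen_step G S ^^ Suc t) {\<one>})"
    using strict by (rule psubset_card_mono)
  then show ?case
    using Suc by simp
qed simp

text \<open>Each iteration that does not stabilise adds an element, so card (carrier G) iterations
  reach the subgroup.\<close>

lemma gen_step_iterate_card_eq_generate:
  assumes fin: "finite (carrier G)" and S: "S \<subseteq> carrier G"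
  shows "(gen_step G S ^^ card (carrier G)) {\<one>} = generate G S"
proof
  let ?c = "card (carrier G)"
  have sub: "(gen_step G S ^^ t) {\<one>} \<subseteq> carrier G" for t
    using gen_step_iterate_subset_generate[OF S] generate_incl[OF S] by blast
  show "(gen_step G S ^^ ?c) {\<one>} \<subseteq> generate G S"
    by (rule gen_step_iterate_subset_generate[OF S])
  have "(gen_step G S ^^ Suc ?c) {\<one>} = (gen_step G S ^^ ?c) {\<one>}"
    using card_gen_step_iterate[OF fin S, of ?c "Suc ?c"] card_mono[OF fin sub[of "Suc ?c"]] by linarith
  moreover have "\<one> \<in> (gen_step G S ^^ ?c) {\<one>}"
    using gen_step_iterate_mono[where S=S and t=0 and A="{\<one>}" and j="?c"] by auto
  ultimately show "generate G S \<subseteq> (gen_step G S ^^ ?c) {\<one>}"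
    by (intro generate_subset_gen_step_closed[OF S _ sub]) auto
qed

end

text \<open>Subsets of {..<n} are represented by natural numbers through their binary digits.\<close>

definition span_step_pred :: "nat \<Rightarrow> nat \<Rightarrow> nat \<Rightarrow> nat \<Rightarrow> bool" where
  "span_step_pred k x S z \<longleftrightarrow> bit S z \<or> (\<exists>y < code_order x. bit S y \<and>
     (\<exists>i < k. z = code_mult x y (code_gen x i) \<or> z = code_mult x y (code_inv x (code_gen x i))))"

definition code_span_step :: "nat \<Rightarrow> nat \<Rightarrow> nat \<Rightarrow> nat" where
  "code_span_step k x S = (LEAST T. \<forall>z < code_order x. bit T z \<longleftrightarrow> span_step_pred k x S z)"

definition code_span_init :: "nat \<Rightarrow> nat" where
  "code_span_init x = (LEAST T. \<forall>z < code_order x. bit T z \<longleftrightarrow> z = code_one x)"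

definition code_span :: "nat \<Rightarrow> nat \<Rightarrow> nat" where
  "code_span k x = (code_span_step k x ^^ code_order x) (code_span_init x)"

definition "span_step_pred_prog k =
  disj_prog (Comp bit_prog [Proj 1, Proj 2])
    (bex_prog (Comp order_prog [Proj 0]) (Comp order_prog [Proj 1])
       (conj_prog (Comp bit_prog [Proj 2, Proj 0])
          (bex_prog (const_prog k) (const_prog k)
             (disj_prog
                (eq_prog (Proj 4) (Comp code_mult_prog [Proj 2, Proj 1, Comp code_gen_prog [Proj 2, Proj 0]]))
                (eq_prog (Proj 4) (Comp code_mult_prog [Proj 2, Proj 1,
                   Comp code_inv_prog [Proj 2, Comp code_gen_prog [Proj 2, Proj 0]]]))))))"

lemma decides_span_step_pred:
  "decides (span_step_pred_prog k) (\<lambda>xs. span_step_pred k (arg 0 xs) (arg 1 xs) (arg 2 xs))"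
  unfolding span_step_pred_prog_def
  by (rule decides_cong[OF decides_disj[OF decides_Comp2[OF decides_bit computes_Proj computes_Proj]
      decides_bex[OF computes_Comp1[OF computes_order computes_Proj] computes_Comp1[OF computes_order computes_Proj] _
      decides_conj[OF decides_Comp2[OF decides_bit computes_Proj computes_Proj]
      decides_bex[OF computes_const computes_const _
      decides_disj[OF decides_eq[OF computes_Proj computes_Comp3[OF computes_code_mult computes_Proj computes_Proj
        computes_Comp2[OF computes_code_gen computes_Proj computes_Proj]]]
      decides_eq[OF computes_Proj computes_Comp3[OF computes_code_mult computes_Proj computes_Proj
        computes_Comp2[OF computes_code_inv computes_Proj computes_Comp2[OF computes_code_gen computes_Proj
        computes_Proj]]]]]]]]]])
    (simp_all add: span_step_pred_def)

definition "code_span_step_prog k =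
  Minim (ball_prog (Comp order_prog [Proj 1]) (Comp order_prog [Proj 2])
    (iff_prog (Comp bit_prog [Proj 1, Proj 0]) (Comp (span_step_pred_prog k) [Proj 2, Proj 3, Proj 0])))"

lemma computes_code_span_step:
  "computes (code_span_step_prog k) (\<lambda>xs. code_span_step k (arg 0 xs) (arg 1 xs))"
  unfolding code_span_step_prog_def code_span_step_def
  by (rule computes_ext[OF computes_Least[OF decides_ball[OF computes_Comp1[OF computes_order computes_Proj]
      computes_Comp1[OF computes_order computes_Proj] _ decides_iff[OF
      decides_Comp2[OF decides_bit computes_Proj computes_Proj]
      decides_Comp3[OF decides_span_step_pred computes_Proj computes_Proj computes_Proj]]]]])
    (simp_all add: ex_bits_below)

definition "code_span_init_prog =
  Minim (ball_prog (Comp order_prog [Proj 1]) (Comp order_prog [Proj 2])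
    (iff_prog (Comp bit_prog [Proj 1, Proj 0]) (eq_prog (Proj 0) (Comp code_one_prog [Proj 2]))))"

lemma computes_code_span_init: "computes code_span_init_prog (\<lambda>xs. code_span_init (arg 0 xs))"
  unfolding code_span_init_prog_def code_span_init_def
  by (rule computes_ext[OF computes_Least[OF decides_ball[OF computes_Comp1[OF computes_order computes_Proj]
      computes_Comp1[OF computes_order computes_Proj] _ decides_iff[OF
      decides_Comp2[OF decides_bit computes_Proj computes_Proj]
      decides_eq[OF computes_Proj computes_Comp1[OF computes_code_one computes_Proj]]]]]])
    (simp_all add: ex_bits_below)

definition "code_span_prog k =
  Comp (PrimRec code_span_init_prog (Comp (code_span_step_prog k) [Proj 2, Proj 0])) [order_prog, Proj 0]"

lemma computes_code_span: "computes (code_span_prog k) (\<lambda>xs. code_span k (arg 0 xs))"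
  unfolding code_span_prog_def code_span_def
  by (rule computes_ext[OF computes_PrimRec[OF computes_code_span_init
      computes_Comp2[OF computes_code_span_step computes_Proj computes_Proj] computes_order computes_Proj]])
    (simp add: rec_nat_funpow)

definition bits_below :: "nat \<Rightarrow> nat \<Rightarrow> nat set" where
  "bits_below n S = {z. z < n \<and> bit S z}"

context marked_table
begin

lemma bits_below_code_span_init: "bits_below n (code_span_init (code n tab fl)) = {\<one>\<^bsub>F\<^esub>}"
proof -
  have "\<forall>z<n. bit (code_span_init (code n tab fl)) z \<longleftrightarrow> z = \<one>\<^bsub>F\<^esub>"
    unfolding code_span_init_def using LeastI_ex[OF ex_bits_below] by (simp add: code_one_eq)
  then show ?thesis using one_less by (auto simp: bits_below_def)
qed

lemma span_step_pred_iff: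
  assumes "z < n"
  shows "span_step_pred k (code n tab fl) S z \<longleftrightarrow> z \<in> gen_step F (set fl) (bits_below n S)"
proof -
  let ?c = "code n tab fl"
  have "(\<exists>i<k. z = code_mult ?c y (code_gen ?c i) \<or> z = code_mult ?c y (code_inv ?c (code_gen ?c i)))
    \<longleftrightarrow> (\<exists>i<k. z = y \<otimes>\<^bsub>F\<^esub> fl ! i \<or> z = y \<otimes>\<^bsub>F\<^esub> inv\<^bsub>F\<^esub> (fl ! i))" if "y < n" for y
    using that marking_less length_fl by (auto simp: code_gen_eq code_mult_eq code_inv_eq inv_less)
  also have "\<dots> y \<longleftrightarrow> (\<exists>g. (g \<in> set fl \<or> g \<in> m_inv F ` set fl) \<and> z = y \<otimes>\<^bsub>F\<^esub> g)" for y
    using length_fl by (auto simp: in_set_conv_nth) (metis image_eqI nth_mem)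
  finally show ?thesis
    using assms by (auto simp: span_step_pred_def gen_step_def bits_below_def)
qed

lemma bits_below_code_span_step:
  "bits_below n (code_span_step k (code n tab fl) S) = gen_step F (set fl) (bits_below n S)"
proof -
  have step: "\<forall>z<n. bit (code_span_step k (code n tab fl) S) z \<longleftrightarrow> span_step_pred k (code n tab fl) S z"
    unfolding code_span_step_def using LeastI_ex[OF ex_bits_below] by simp
  have "gen_step F (set fl) (bits_below n S) \<subseteq> {..<n}"
    using marking_less unfolding gen_step_def bits_below_def
    by (auto intro!: F.m_closed[simplified] simp: F.inv_closed[simplified])
  then show ?thesis
    using step span_step_pred_iff by (auto simp: bits_below_def)
qed

lemma bits_below_code_span: "bits_below n (code_span k (code n tab fl)) = generate F (set fl)"
proof -
  have "bits_below n ((code_span_step k (code n tab fl) ^^ t) (code_span_init (code n tab fl))) =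
      (gen_step F (set fl) ^^ t) {\<one>\<^bsub>F\<^esub>}" for t
    by (induction t) (simp_all add: bits_below_code_span_init bits_below_code_span_step)
  moreover have "(gen_step F (set fl) ^^ n) {\<one>\<^bsub>F\<^esub>} = generate F (set fl)"
    using F.gen_step_iterate_card_eq_generate[of "set fl"] marking_less by auto
  ultimately show ?thesis by (simp add: code_span_def)
qed

lemma bit_code_span_iff:
  "z < n \<Longrightarrow> bit (code_span k (code n tab fl)) z \<longleftrightarrow> z \<in> generate F (set fl)"
  using bits_below_code_span by (auto simp: bits_below_def)

end

section \<open>The quotient test\<close>

definition digit :: "nat \<Rightarrow> nat \<Rightarrow> nat \<Rightarrow> nat" where
  "digit n q i = q div n ^ i mod n"

lemma ex_digits:
  assumes "0 < n" "\<forall>i<k. m i < n"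
  shows "\<exists>q < n ^ k. \<forall>i<k. digit n q i = m i"
  using assms(2)
proof (induction k arbitrary: m)
  case (Suc k)
  obtain q where q: "q < n ^ k" "\<forall>i<k. digit n q i = m (Suc i)"
    using Suc.IH[of "\<lambda>i. m (Suc i)"] Suc.prems by auto
  have m0: "m 0 < n" using Suc.prems by auto
  have "m 0 + n * q < n * Suc q" using m0 by simp
  also have "\<dots> \<le> n * n ^ k" using q(1) by (intro mult_le_mono2) simp
  finally have "m 0 + n * q < n ^ Suc k" by simp
  moreover have "digit n (m 0 + n * q) i = m i" if "i < Suc k" for i
    using that m0 assms(1) q(2) by (cases i) (auto simp: digit_def div_mult2_eq)
  ultimately show ?case by blast
qed simp

definition "digit_prog = Comp mod_prog [Comp div_prog [Proj 1, Comp power_prog [Proj 0, Proj 2]], Proj 0]"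

lemma computes_digit: "computes digit_prog (\<lambda>xs. digit (arg 0 xs) (arg 1 xs) (arg 2 xs))"
  unfolding digit_prog_def digit_def
  by (rule computes_ext[OF computes_Comp2[OF computes_mod computes_Comp2[OF computes_div computes_Proj
      computes_Comp2[OF computes_power computes_Proj computes_Proj]] computes_Proj]]) simp

definition "span_member_prog k = Comp bit_prog [Comp (code_span_prog k) [Proj 0], Proj 1]"

lemma decides_span_member:
  "decides (span_member_prog k) (\<lambda>xs. bit (code_span k (arg 0 xs)) (arg 1 xs))"
  unfolding span_member_prog_def
  by (rule decides_cong[OF decides_Comp2[OF decides_bit computes_Comp1[OF computes_code_span computes_Proj]
      computes_Proj]]) simp

text \<open>The j-tuples from the span of the marking are enumerated as the base-n digit strings q < n^j.\<close>

definition relator_test ::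
    "(nat \<times> bool) list list \<Rightarrow> (nat \<times> (nat \<times> bool) list) list \<Rightarrow> nat \<Rightarrow> nat \<Rightarrow> bool" where
  "relator_test rws vs k x \<longleftrightarrow>
     (\<forall>w\<in>set rws. code_word_eval x w (code_gen x) = code_one x) \<and>
     (\<forall>(j, w)\<in>set vs. \<forall>q < code_order x ^ j.
        (\<forall>i<j. bit (code_span k x) (digit (code_order x) q i)) \<longrightarrow>
        code_word_eval x w (digit (code_order x) q) = code_one x)"

definition "relator_prog w =
  eq_prog (word_prog (\<lambda>i. Comp code_gen_prog [Proj 0, const_prog i]) (Proj 0) w) (Comp code_one_prog [Proj 0])"

lemma decides_relator:
  "decides (relator_prog w) (\<lambda>xs. code_word_eval (arg 0 xs) w (code_gen (arg 0 xs)) = code_one (arg 0 xs))"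
  unfolding relator_prog_def
  by (rule decides_cong[OF decides_eq[OF computes_word[OF computes_Proj
      computes_Comp2[OF computes_code_gen computes_Proj computes_const]]
      computes_Comp1[OF computes_code_one computes_Proj]]]) simp

definition "law_prog k jw = (case jw of (j, w) \<Rightarrow>
  ball_prog (Comp power_prog [Comp order_prog [Proj 0], const_prog j])
    (Comp power_prog [Comp order_prog [Proj 1], const_prog j])
    (imp_prog
      (ball_prog (const_prog j) (const_prog j)
        (Comp (span_member_prog k) [Proj 2, Comp digit_prog [Comp order_prog [Proj 2], Proj 1, Proj 0]]))
      (eq_prog (word_prog (\<lambda>i. Comp digit_prog [Comp order_prog [Proj 1], Proj 0, const_prog i]) (Proj 1) w)
        (Comp code_one_prog [Proj 1]))))"

lemma decides_law:
  "decides (law_prog k (j, w)) (\<lambda>xs. \<forall>q < code_order (arg 0 xs) ^ j.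
      (\<forall>i<j. bit (code_span k (arg 0 xs)) (digit (code_order (arg 0 xs)) q i)) \<longrightarrow>
      code_word_eval (arg 0 xs) w (digit (code_order (arg 0 xs)) q) = code_one (arg 0 xs))"
  unfolding law_prog_def prod.case
  by (rule decides_cong[OF decides_ball[OF
      computes_Comp2[OF computes_power computes_Comp1[OF computes_order computes_Proj] computes_const]
      computes_Comp2[OF computes_power computes_Comp1[OF computes_order computes_Proj] computes_const] _
      decides_imp[OF decides_ball[OF computes_const computes_const _
        decides_Comp2[OF decides_span_member computes_Proj computes_Comp3[OF computes_digit
          computes_Comp1[OF computes_order computes_Proj] computes_Proj computes_Proj]]]
      decides_eq[OF computes_word[OF computes_Proj computes_Comp3[OF computes_digit
          computes_Comp1[OF computes_order computes_Proj] computes_Proj computes_const]]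
        computes_Comp1[OF computes_code_one computes_Proj]]]]])
    simp_all

definition "relator_test_prog rws vs k = conj_prog (all_prog (map relator_prog rws)) (all_prog (map (law_prog k) vs))"

lemma decides_relator_test: "decides (relator_test_prog rws vs k) (\<lambda>xs. relator_test rws vs k (arg 0 xs))"
  unfolding relator_test_prog_def relator_test_def
  by (rule decides_cong[OF decides_conj[OF decides_all[OF decides_relator] decides_all]])
    (auto intro: decides_law)

definition relators_vanish ::
    "('a, 'b) monoid_scheme \<Rightarrow> 'a list \<Rightarrow> (nat \<times> bool) list list \<Rightarrow> (nat \<times> (nat \<times> bool) list) list \<Rightarrow> bool" where
  "relators_vanish F fl rws vs \<longleftrightarrow>
     (\<forall>w\<in>set rws. word_eval F w (\<lambda>i. fl ! i) = \<one>\<^bsub>F\<^esub>) \<and>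
     (\<forall>(k, w)\<in>set vs. \<forall>m. (\<forall>i<k. m i \<in> generate F (set fl)) \<longrightarrow> word_eval F w m = \<one>\<^bsub>F\<^esub>)"

context marked_table
begin

lemma n_pos: "0 < n"
  using one_less by simp

lemma relator_code_iff:
  assumes "\<forall>(i, b)\<in>set w. i < k"
  shows "code_word_eval (code n tab fl) w (code_gen (code n tab fl)) = code_one (code n tab fl) \<longleftrightarrow>
    word_eval F w (\<lambda>i. fl ! i) = \<one>\<^bsub>F\<^esub>"
proof -
  have gen: "\<forall>(i, b)\<in>set w. code_gen (code n tab fl) i = fl ! i \<and> fl ! i < n"
    using assms marking_less length_fl by (auto simp: code_gen_eq)
  then have "code_word_eval (code n tab fl) w (code_gen (code n tab fl)) =
      word_eval F w (code_gen (code n tab fl))"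
    by (intro code_word_eval_eq) auto
  also have "\<dots> = word_eval F w (\<lambda>i. fl ! i)"
    using gen by (intro word_eval_cong) auto
  finally show ?thesis by (simp add: code_one_eq)
qed

lemma law_code_iff:
  assumes w: "\<forall>(i, b)\<in>set w. i < j"
  shows "(\<forall>q < n ^ j. (\<forall>i<j. bit (code_span k (code n tab fl)) (digit n q i)) \<longrightarrow>
      code_word_eval (code n tab fl) w (digit n q) = code_one (code n tab fl)) \<longleftrightarrow>
    (\<forall>m. (\<forall>i<j. m i \<in> generate F (set fl)) \<longrightarrow> word_eval F w m = \<one>\<^bsub>F\<^esub>)"
    (is "?code \<longleftrightarrow> ?math")
proof -
  have digit_less: "digit n q i < n" for q i
    using n_pos by (simp add: digit_def)
  then have word: "code_word_eval (code n tab fl) w (digit n q) = word_eval F w (digit n q)" for q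
    by (intro code_word_eval_eq) auto
  have span: "bit (code_span k (code n tab fl)) (digit n q i) \<longleftrightarrow> digit n q i \<in> generate F (set fl)" for q i
    using bit_code_span_iff digit_less by blast
  show ?thesis
  proof
    assume ?code
    show ?math
    proof (intro allI impI)
      fix m assume m: "\<forall>i<j. m i \<in> generate F (set fl)"
      then have "\<forall>i<j. m i < n"
        using F.generate_incl[of "set fl"] marking_less by auto
      then obtain q where q: "q < n ^ j" "\<forall>i<j. digit n q i = m i"
        using ex_digits[OF n_pos] by blast
      then have "word_eval F w (digit n q) = \<one>\<^bsub>F\<^esub>"
        using \<open>?code\<close> m span word by (simp add: code_one_eq)
      moreover have "word_eval F w (digit n q) = word_eval F w m"
        using w q(2) by (intro word_eval_cong) auto
      ultimately show "word_eval F w m = \<one>\<^bsub>F\<^esub>" by simp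
    qed
  next
    assume ?math
    then show ?code
      using span word by (simp add: code_one_eq)
  qed
qed

lemma relator_test_iff:
  assumes "\<forall>w\<in>set rws. \<forall>(i, b)\<in>set w. i < k" "\<forall>(j, w)\<in>set vs. \<forall>(i, b)\<in>set w. i < j"
  shows "relator_test rws vs k (code n tab fl) \<longleftrightarrow> relators_vanish F fl rws vs"
  unfolding relator_test_def relators_vanish_def code_order_code
  using relator_code_iff law_code_iff assms by (auto 0 3 simp: case_prod_beta)

end

section \<open>Normal closures and kernels\<close>

context group
begin

lemma normal_closure_normal: "A \<subseteq> carrier G \<Longrightarrow> normal_closure G A \<lhd> G"
  unfolding normal_closure_def
proof (rule normal_generateI)
  assume A: "A \<subseteq> carrier G"
  then show "{x \<otimes> a \<otimes> inv x |x a. x \<in> carrier G \<and> a \<in> A} \<subseteq> carrier G" by auto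
  fix h g assume "h \<in> {x \<otimes> a \<otimes> inv x |x a. x \<in> carrier G \<and> a \<in> A}" and g: "g \<in> carrier G"
  then obtain x a where xa: "h = x \<otimes> a \<otimes> inv x" "x \<in> carrier G" "a \<in> A" by blast
  then have "g \<otimes> h \<otimes> inv g = (g \<otimes> x) \<otimes> a \<otimes> inv (g \<otimes> x)"
    using A g by (auto simp: inv_mult_group m_assoc)
  then show "g \<otimes> h \<otimes> inv g \<in> {x \<otimes> a \<otimes> inv x |x a. x \<in> carrier G \<and> a \<in> A}"
    using xa g by blast
qed

lemma normal_closure_subset_iff:
  assumes "N \<lhd> G" "A \<subseteq> carrier G"
  shows "normal_closure G A \<subseteq> N \<longleftrightarrow> A \<subseteq> N"
proof
  have "a \<in> normal_closure G A" if "a \<in> A" for a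
  proof -
    have "a = \<one> \<otimes> a \<otimes> inv \<one>" using that assms(2) by auto
    then show ?thesis
      unfolding normal_closure_def using that by (blast intro: generate.incl)
  qed
  then show "normal_closure G A \<subseteq> N \<Longrightarrow> A \<subseteq> N" by blast
next
  assume "A \<subseteq> N"
  then show "normal_closure G A \<subseteq> N"
    unfolding normal_closure_def using assms(1)
    by (intro generate_subgroup_incl) (auto intro: normal.inv_op_closed2 normal_imp_subgroup)
qed

lemma word_values_subset_carrier:
  "\<forall>(i, b)\<in>set w. i < k \<Longrightarrow> word_values G k w \<subseteq> carrier G"
  unfolding word_values_def by (fastforce intro: word_eval_closed)

definition word_of :: "'a list \<Rightarrow> 'a \<Rightarrow> (nat \<times> bool) list" where
  "word_of s r = (SOME w. (\<forall>(i, b)\<in>set w. i < length s) \<and> r = word_eval G w (\<lambda>i. s ! i))"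

lemma word_of:
  assumes "gen_list G s" "r \<in> carrier G"
  shows "\<forall>(i, b)\<in>set (word_of s r). i < length s" "word_eval G (word_of s r) (\<lambda>i. s ! i) = r"
proof -
  have "\<exists>w. (\<forall>(i, b)\<in>set w. i < length s) \<and> r = word_eval G w (\<lambda>i. s ! i)"
    using generate_eq_word_evals assms by (auto simp: gen_list_def)
  from someI_ex[OF this] show "\<forall>(i, b)\<in>set (word_of s r). i < length s"
    "word_eval G (word_of s r) (\<lambda>i. s ! i) = r"
    unfolding word_of_def by auto
qed

end

context group_hom
begin

lemma image_eq_generate_marking:
  assumes "gen_list G s"
  shows "h ` carrier G = generate H (set (map h s))"
  using generate_img[of "set s"] assms by (simp add: gen_list_def)

lemma word_values_subset_kernel_iff:
  assumes "\<forall>(i, b)\<in>set w. i < k"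
  shows "word_values G k w \<subseteq> kernel G H h \<longleftrightarrow>
    (\<forall>m. (\<forall>i<k. m i \<in> h ` carrier G) \<longrightarrow> word_eval H w m = \<one>\<^bsub>H\<^esub>)"
proof
  assume vanish: "word_values G k w \<subseteq> kernel G H h"
  show "\<forall>m. (\<forall>i<k. m i \<in> h ` carrier G) \<longrightarrow> word_eval H w m = \<one>\<^bsub>H\<^esub>"
  proof (intro allI impI)
    fix m assume m: "\<forall>i<k. m i \<in> h ` carrier G"
    define g where "g i = inv_into (carrier G) h (m i)" for i
    have g: "\<forall>i<k. g i \<in> carrier G \<and> h (g i) = m i"
      using m by (auto simp: g_def inv_into_into f_inv_into_f)
    then have "word_eval G w g \<in> word_values G k w"
      unfolding word_values_def by blast
    then have "h (word_eval G w g) = \<one>\<^bsub>H\<^esub>"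
      using vanish by (auto simp: kernel_def)
    moreover have "h (word_eval G w g) = word_eval H w (\<lambda>i. h (g i))"
      using g assms by (intro word_eval_hom) auto
    moreover have "\<dots> = word_eval H w m"
      using g assms by (intro word_eval_cong) auto
    ultimately show "word_eval H w m = \<one>\<^bsub>H\<^esub>" by simp
  qed
next
  assume vanish: "\<forall>m. (\<forall>i<k. m i \<in> h ` carrier G) \<longrightarrow> word_eval H w m = \<one>\<^bsub>H\<^esub>"
  show "word_values G k w \<subseteq> kernel G H h"
  proof
    fix v assume v: "v \<in> word_values G k w"
    then obtain g where g: "v = word_eval G w g" "\<forall>i<k. g i \<in> carrier G"
      unfolding word_values_def by blast
    have "h v = word_eval H w (\<lambda>i. h (g i))"
      unfolding g(1) using g(2) assms by (intro word_eval_hom) auto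
    also have "\<dots> = \<one>\<^bsub>H\<^esub>"
      using vanish[rule_format, of "\<lambda>i. h (g i)"] g(2) by auto
    finally show "v \<in> kernel G H h"
      using v G.word_values_subset_carrier[OF assms] by (auto simp: kernel_def)
  qed
qed

lemma relator_in_kernel_iff:
  assumes "gen_list G s" "r \<in> carrier G"
  shows "r \<in> kernel G H h \<longleftrightarrow> word_eval H (G.word_of s r) (\<lambda>i. map h s ! i) = \<one>\<^bsub>H\<^esub>"
proof -
  have "\<forall>(i, b)\<in>set (G.word_of s r). s ! i \<in> carrier G"
    using G.word_of(1)[OF assms] assms(1) by (fastforce simp: gen_list_def)
  then have "h r = word_eval H (G.word_of s r) (\<lambda>i. h (s ! i))"
    using G.word_of(2)[OF assms] word_eval_hom by metis
  also have "\<dots> = word_eval H (G.word_of s r) (\<lambda>i. map h s ! i)"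
    using G.word_of(1)[OF assms] by (intro word_eval_cong) auto
  finally show ?thesis using assms(2) by (simp add: kernel_def)
qed

end

definition relator_closure :: "('a, 'b) monoid_scheme \<Rightarrow> 'a list \<Rightarrow> (nat \<times> (nat \<times> bool) list) list \<Rightarrow> 'a set" where
  "relator_closure G rs vs = normal_closure G (set rs \<union> (\<Union>(k, w)\<in>set vs. word_values G k w))"

lemma (in group) relator_closure_normal:
  assumes "set rs \<subseteq> carrier G" "\<forall>(k, w)\<in>set vs. \<forall>(i, b)\<in>set w. i < k"
  shows "relator_closure G rs vs \<lhd> G"
  unfolding relator_closure_def using assms word_values_subset_carrier
  by (intro normal_closure_normal) fast

lemma (in group_hom) relator_closure_subset_kernel_iff:
  assumes gen: "gen_list G s" and rs: "set rs \<subseteq> carrier G" and vs: "\<forall>(k, w)\<in>set vs. \<forall>(i, b)\<in>set w. i < k"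
  shows "relator_closure G rs vs \<subseteq> kernel G H h \<longleftrightarrow> relators_vanish H (map h s) (map (G.word_of s) rs) vs"
proof -
  have "relator_closure G rs vs \<subseteq> kernel G H h \<longleftrightarrow>
      set rs \<subseteq> kernel G H h \<and> (\<forall>(k, w)\<in>set vs. word_values G k w \<subseteq> kernel G H h)"
    unfolding relator_closure_def using rs vs G.word_values_subset_carrier
    by (subst G.normal_closure_subset_iff[OF normal_kernel]) fast+
  also have "\<dots> \<longleftrightarrow> relators_vanish H (map h s) (map (G.word_of s) rs) vs"
  proof -
    have "set rs \<subseteq> kernel G H h \<longleftrightarrow>
        (\<forall>w\<in>set (map (G.word_of s) rs). word_eval H w (\<lambda>i. map h s ! i) = \<one>\<^bsub>H\<^esub>)"
      using relator_in_kernel_iff[OF gen] rs by auto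
    moreover have "(\<forall>(k, w)\<in>set vs. word_values G k w \<subseteq> kernel G H h) \<longleftrightarrow>
        (\<forall>(k, w)\<in>set vs. \<forall>m. (\<forall>i<k. m i \<in> generate H (set (map h s))) \<longrightarrow> word_eval H w m = \<one>\<^bsub>H\<^esub>)"
      unfolding image_eq_generate_marking[OF gen, symmetric] using vs
      by (intro ball_cong refl) (auto simp: word_values_subset_kernel_iff split: prod.splits)
    ultimately show ?thesis
      unfolding relators_vanish_def by simp
  qed
  finally show ?thesis .
qed

lemma FactGroup_hom_marking_iff:
  assumes N: "N \<lhd> G" and F: "group F" and s: "set s \<subseteq> carrier G"
  shows "(\<exists>g\<in>hom (G Mod N) F. \<forall>i<length s. g (map (r_coset G N) s ! i) = fl ! i) \<longleftrightarrow>
    (\<exists>h\<in>hom G F. (\<forall>i<length s. h (s ! i) = fl ! i) \<and> N \<subseteq> kernel G F h)"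
proof
  interpret N: normal N G by (rule N)
  assume "\<exists>g\<in>hom (G Mod N) F. \<forall>i<length s. g (map (r_coset G N) s ! i) = fl ! i"
  then obtain g where g: "g \<in> hom (G Mod N) F" "\<forall>i<length s. g (r_coset G N (s ! i)) = fl ! i"
    by auto
  have "g \<circ> r_coset G N \<in> hom G F"
    using hom_compose[OF N.r_coset_hom_Mod g(1)] .
  moreover have "N \<subseteq> kernel G F (g \<circ> r_coset G N)"
    using hom_one[OF g(1) N.factorgroup_is_group F] N.subset
    by (auto simp: kernel_def N.rcos_const)
  ultimately show "\<exists>h\<in>hom G F. (\<forall>i<length s. h (s ! i) = fl ! i) \<and> N \<subseteq> kernel G F h"
    using g(2) by (intro bexI[of _ "g \<circ> r_coset G N"]) auto
next
  assume "\<exists>h\<in>hom G F. (\<forall>i<length s. h (s ! i) = fl ! i) \<and> N \<subseteq> kernel G F h"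
  then obtain h where h: "h \<in> hom G F" "\<forall>i<length s. h (s ! i) = fl ! i" "N \<subseteq> kernel G F h"
    by blast
  interpret h: group_hom G F h
    unfolding group_hom_def group_hom_axioms_def using normal.axioms(2)[OF N] F h(1) by blast
  obtain g where g: "g \<in> hom (G Mod N) F" "\<And>x. x \<in> carrier G \<Longrightarrow> g (r_coset G N x) = h x"
    using h.FactGroup_universal_kernel[OF N h(3)] by blast
  have "\<forall>i<length s. g (map (r_coset G N) s ! i) = fl ! i"
    using g(2) h(2) s by (simp add: subset_iff)
  then show "\<exists>g\<in>hom (G Mod N) F. \<forall>i<length s. g (map (r_coset G N) s ! i) = fl ! i"
    using g(1) by blast
qed

lemma gen_list_FactGroup:
  assumes N: "N \<lhd> G" and gen: "gen_list G s"
  shows "gen_list (G Mod N) (map (r_coset G N) s)"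
proof -
  interpret N: normal N G by (rule N)
  interpret q: group_hom G "G Mod N" "r_coset G N"
    by (simp add: group_hom_def group_hom_axioms_def N.is_group N.factorgroup_is_group N.r_coset_hom_Mod)
  show ?thesis
    using q.image_eq_generate_marking[OF gen] gen q.hom_closed
    by (auto simp: gen_list_def carrier_FactGroup)
qed

lemma extends_hom_relator_quotient_iff:
  assumes G: "group G" and rs: "set rs \<subseteq> carrier G" and vs: "\<forall>(k, w)\<in>set vs. \<forall>(i, b)\<in>set w. i < k"
    and gen: "gen_list G s" and valid: "valid_marked (length s) n tab fl"
  defines "K \<equiv> relator_closure G rs vs"
  shows "extends_hom (G Mod K) (map (r_coset G K) s) n tab fl \<longleftrightarrow>
    extends_hom G s n tab fl \<and> relator_test (map (group.word_of G s) rs) vs (length s) (code n tab fl)"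
proof -
  interpret G: group G by (rule G)
  interpret T: marked_table "length s" n tab fl by (rule marked_table.intro[OF valid])
  let ?F = "tbl_grp n tab"
  have test: "relator_test (map (G.word_of s) rs) vs (length s) (code n tab fl) \<longleftrightarrow>
      relators_vanish ?F fl (map (G.word_of s) rs) vs"
    using G.word_of(1)[OF gen] rs vs by (intro T.relator_test_iff) auto
  have "K \<subseteq> kernel G ?F h \<longleftrightarrow> relators_vanish ?F fl (map (G.word_of s) rs) vs"
    if h: "h \<in> hom G ?F" "\<forall>i<length s. h (s ! i) = fl ! i" for h
  proof -
    interpret h: group_hom G ?F h
      by (simp add: group_hom_def group_hom_axioms_def G T.F.is_group h(1))
    have "map h s = fl"
      using h(2) T.length_fl by (intro nth_equalityI) auto
    then show ?thesis
      unfolding K_def using h.relator_closure_subset_kernel_iff[OF gen rs vs] by simp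
  qed
  moreover have "extends_hom (G Mod K) (map (r_coset G K) s) n tab fl \<longleftrightarrow>
      (\<exists>h\<in>hom G ?F. (\<forall>i<length s. h (s ! i) = fl ! i) \<and> K \<subseteq> kernel G ?F h)"
    unfolding extends_hom_def K_def length_map
    using gen G.relator_closure_normal[OF rs vs] T.F.is_group
    by (intro FactGroup_hom_marking_iff) (auto simp: gen_list_def)
  ultimately show ?thesis
    unfolding extends_hom_def test by blast
qed

lemma eval_Comp2_iff: "eval (Comp f [a, b]) xs z \<longleftrightarrow> (\<exists>y1 y2. eval a xs y1 \<and> eval b xs y2 \<and> eval f [y1, y2] z)"
proof
  assume "eval (Comp f [a, b]) xs z"
  then obtain ys where "list_all2 (\<lambda>g y. eval g xs y) [a, b] ys" "eval f ys z"
    by (cases rule: eval.cases) auto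
  then show "\<exists>y1 y2. eval a xs y1 \<and> eval b xs y2 \<and> eval f [y1, y2] z"
    by (auto simp: list_all2_Cons1)
qed (auto intro: eval_Comp)

lemma eval_add_prog_iff:
  "eval (Comp add_prog [t, u]) xs z \<longleftrightarrow> (\<exists>v w. eval t xs v \<and> eval u xs w \<and> z = v + w)"
proof -
  have "eval add_prog [v, w] z \<longleftrightarrow> z = v + w" for v w z
  proof
    show "eval add_prog [v, w] z \<Longrightarrow> z = v + w"
      using computes_evalD[OF computes_add] by fastforce
    show "z = v + w \<Longrightarrow> eval add_prog [v, w] z"
      using computes_add[unfolded computes_def, rule_format, of "[v, w]"] by simp
  qed
  then show ?thesis unfolding eval_Comp2_iff by blast
qed

lemma halts_add_prog: "halts (Comp add_prog [t, u]) c \<longleftrightarrow> halts t c \<and> halts u c"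
  unfolding halts_def eval_add_prog_iff by blast

lemma halts_search_iff:
  assumes "decides p P"
  shows "halts (Minim (Comp p [Proj 1])) c \<longleftrightarrow> P [c]"
proof -
  obtain F where F: "computes p F" "\<And>xs. F xs = 0 \<longleftrightarrow> P xs"
    using assms unfolding decides_def by blast
  have p: "computes (Comp p [Proj 1]) (\<lambda>xs. F [arg 1 xs])"
    by (rule computes_Comp1[OF F(1) computes_Proj])
  show ?thesis
  proof
    assume "halts (Minim (Comp p [Proj 1])) c"
    then obtain v where "eval (Minim (Comp p [Proj 1])) [c] v" unfolding halts_def by blast
    then have "eval (Comp p [Proj 1]) [v, c] 0" by (cases rule: eval.cases) auto
    then show "P [c]" using computes_evalD[OF p] F(2) by fastforce
  next
    assume "P [c]"
    then have "eval (Comp p [Proj 1]) [0, c] 0"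
      using p F(2) unfolding computes_def by (metis arg_Cons_0 arg_Cons_Suc One_nat_def)
    then have "eval (Minim (Comp p [Proj 1])) [c] 0" by (intro eval_Mn) auto
    then show "halts (Minim (Comp p [Proj 1])) c" unfolding halts_def by blast
  qed
qed

text \<open>Primitive recursion over the value of q runs t only in the successor case.\<close>

definition "unless_prog q t = Comp (PrimRec Zero (Comp t [Proj 2])) [q, Proj 0]"

lemma halts_unless_prog_iff:
  assumes "decides q Q"
  shows "halts (unless_prog q t) c \<longleftrightarrow> Q [c] \<or> halts t c"
proof -
  obtain A where A: "computes q A" "\<And>xs. A xs = 0 \<longleftrightarrow> Q xs"
    using assms unfolding decides_def by blast
  have rec: "(\<exists>z. eval (PrimRec Zero (Comp t [Proj 2])) [m, c] z) \<longleftrightarrow> m = 0 \<or> halts t c" for m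
  proof
    assume "\<exists>z. eval (PrimRec Zero (Comp t [Proj 2])) [m, c] z"
    then obtain z where z: "eval (PrimRec Zero (Comp t [Proj 2])) [m, c] z" by blast
    show "m = 0 \<or> halts t c"
    proof (cases m)
      case (Suc m')
      from z obtain y where "eval (Comp t [Proj 2]) [y, m', c] z"
        unfolding Suc by (cases rule: eval.cases) auto
      then obtain c' where "eval (Proj 2) [y, m', c] c'" "eval t [c'] z"
        by (cases rule: eval.cases) (auto simp: list_all2_Cons1)
      moreover from this(1) have "c' = c" by (cases rule: eval.cases) auto
      ultimately show ?thesis unfolding halts_def by blast
    qed simp
  next
    have start: "eval (PrimRec Zero (Comp t [Proj 2])) [0, c] 0"
      by (rule eval_Pr0[OF eval_Zero])
    assume "m = 0 \<or> halts t c"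
    then consider "m = 0" | v where "eval t [c] v" unfolding halts_def by blast
    then show "\<exists>z. eval (PrimRec Zero (Comp t [Proj 2])) [m, c] z"
    proof cases
      case 2
      have "eval (Comp t [Proj 2]) [y, j, c] v" for y j
        using 2 eval_Proj[of 2 "[y, j, c]"] by (intro eval_Comp) auto
      then show ?thesis
        using start by (induction m) (auto intro: eval_PrS)
    qed (use start in blast)
  qed
  have "halts (unless_prog q t) c \<longleftrightarrow> (\<exists>z. eval (PrimRec Zero (Comp t [Proj 2])) [A [c], c] z)"
    unfolding halts_def unless_prog_def eval_Comp2_iff
    using computes_evalD[OF A(1)] A(1) eval_Proj[of 0 "[c]"] eval_deterministic[of "Proj 0" "[c]"]
    unfolding computes_def by fastforce
  then show ?thesis using rec A(2) by simp
qed

section \<open>Transfer to the quotient\<close>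

definition decidably_refines :: "('a, 'b) monoid_scheme \<Rightarrow> ('c, 'd) monoid_scheme \<Rightarrow> bool" where
  "decidably_refines G H \<longleftrightarrow> (\<forall>s. gen_list G s \<longrightarrow> (\<exists>s' p P. gen_list H s' \<and> length s' = length s \<and>
     decides p P \<and> (\<forall>n tab fl. valid_marked (length s) n tab fl \<longrightarrow>
       (extends_hom H s' n tab fl \<longleftrightarrow> extends_hom G s n tab fl \<and> P [code n tab fl]))))"

lemma CFQ_decidably_refines:
  assumes "CFQ G" "decidably_refines G H"
  shows "CFQ H"
proof -
  obtain s t where s: "gen_list G s" and t: "\<forall>n tab fl. valid_marked (length s) n tab fl \<longrightarrow>
      halts t (code n tab fl) \<and> (eval t [code n tab fl] 0 \<longleftrightarrow> extends_hom G s n tab fl)"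
    using assms(1) unfolding CFQ_def by blast
  obtain s' p P where s': "gen_list H s'" "length s' = length s" and "decides p P"
    and ext: "\<forall>n tab fl. valid_marked (length s) n tab fl \<longrightarrow>
      (extends_hom H s' n tab fl \<longleftrightarrow> extends_hom G s n tab fl \<and> P [code n tab fl])"
    using assms(2) s unfolding decidably_refines_def by blast
  then obtain F where F: "computes p F" "\<And>xs. F xs = 0 \<longleftrightarrow> P xs"
    unfolding decides_def by blast
  have "halts (Comp add_prog [t, p]) c \<and> (eval (Comp add_prog [t, p]) [c] 0 \<longleftrightarrow> eval t [c] 0 \<and> P [c])"
    if "halts t c" for c
    using that F halts_add_prog[of t p c] eval_deterministic[of t "[c]"] computes_evalD[OF F(1)]
    unfolding eval_add_prog_iff halts_def computes_def by (metis add_is_0)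
  then show ?thesis
    unfolding CFQ_def using s' t ext by (metis (no_types, lifting))
qed

lemma ReFQ_decidably_refines:
  assumes "ReFQ G" "decidably_refines G H"
  shows "ReFQ H"
proof -
  obtain s t where s: "gen_list G s" and t: "\<forall>n tab fl. valid_marked (length s) n tab fl \<longrightarrow>
      (halts t (code n tab fl) \<longleftrightarrow> extends_hom G s n tab fl)"
    using assms(1) unfolding ReFQ_def by blast
  obtain s' p P where s': "gen_list H s'" "length s' = length s" and p: "decides p P"
    and ext: "\<forall>n tab fl. valid_marked (length s) n tab fl \<longrightarrow>
      (extends_hom H s' n tab fl \<longleftrightarrow> extends_hom G s n tab fl \<and> P [code n tab fl])"
    using assms(2) s unfolding decidably_refines_def by blast
  have "halts (Comp add_prog [t, Minim (Comp p [Proj 1])]) c \<longleftrightarrow> halts t c \<and> P [c]" for c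
    using halts_add_prog halts_search_iff[OF p] by blast
  then show ?thesis
    unfolding ReFQ_def using s' t ext by (metis (no_types, lifting))
qed

lemma coReFQ_decidably_refines:
  assumes "coReFQ G" "decidably_refines G H"
  shows "coReFQ H"
proof -
  obtain s t where s: "gen_list G s" and t: "\<forall>n tab fl. valid_marked (length s) n tab fl \<longrightarrow>
      (halts t (code n tab fl) \<longleftrightarrow> \<not> extends_hom G s n tab fl)"
    using assms(1) unfolding coReFQ_def by blast
  obtain s' p P where s': "gen_list H s'" "length s' = length s" and p: "decides p P"
    and ext: "\<forall>n tab fl. valid_marked (length s) n tab fl \<longrightarrow>
      (extends_hom H s' n tab fl \<longleftrightarrow> extends_hom G s n tab fl \<and> P [code n tab fl])"
    using assms(2) s unfolding decidably_refines_def by blast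
  have "halts (unless_prog (neg_prog p) t) c \<longleftrightarrow> \<not> P [c] \<or> halts t c" for c
    using halts_unless_prog_iff[OF decides_neg[OF p]] .
  then show ?thesis
    unfolding coReFQ_def using s' t ext by (metis (no_types, lifting))
qed

lemma decidably_refines_relator_quotient:
  assumes "group G" "set rs \<subseteq> carrier G" "\<forall>(k, w)\<in>set vs. \<forall>(i, b)\<in>set w. i < k"
  shows "decidably_refines G (G Mod relator_closure G rs vs)"
  unfolding decidably_refines_def
proof (intro allI impI)
  fix s assume s: "gen_list G s"
  show "\<exists>s' p P. gen_list (G Mod relator_closure G rs vs) s' \<and> length s' = length s \<and> decides p P \<and>
    (\<forall>n tab fl. valid_marked (length s) n tab fl \<longrightarrow>
      (extends_hom (G Mod relator_closure G rs vs) s' n tab fl \<longleftrightarrow>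
       extends_hom G s n tab fl \<and> P [code n tab fl]))"
    using gen_list_FactGroup[OF group.relator_closure_normal[OF assms] s]
      extends_hom_relator_quotient_iff[OF assms s] decides_relator_test
    by (intro exI[of _ "map (r_coset G (relator_closure G rs vs)) s"]
        exI[of _ "relator_test_prog (map (group.word_of G s) rs) vs (length s)"]
        exI[of _ "\<lambda>xs. relator_test (map (group.word_of G s) rs) vs (length s) (arg 0 xs)"])
      simp
qed

theorem mainTheorem11:
  fixes G :: "('a, 'b) monoid_scheme"
    and rs :: "'a list"
    and vs :: "(nat \<times> (nat \<times> bool) list) list"
  assumes "group G"
    and "\<exists>S. finite S \<and> S \<subseteq> carrier G \<and> generate G S = carrier G"
    and "set rs \<subseteq> carrier G"
    and "\<forall>(k, w) \<in> set vs. \<forall>(i, b) \<in> set w. i < k"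
  defines "K \<equiv> normal_closure G (set rs \<union> (\<Union>(k, w) \<in> set vs. word_values G k w))"
  shows "(CFQ G \<longrightarrow> CFQ (G Mod K)) \<and> (ReFQ G \<longrightarrow> ReFQ (G Mod K))
         \<and> (coReFQ G \<longrightarrow> coReFQ (G Mod K))"
proof -
  have "decidably_refines G (G Mod K)"
    unfolding K_def relator_closure_def[symmetric]
    using decidably_refines_relator_quotient[OF assms(1,3,4)] .
  then show ?thesis
    using CFQ_decidably_refines ReFQ_decidably_refines coReFQ_decidably_refines by blast
qed

end
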